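(* Let $V=\mathbb R^{p,q}$, $W$ a $C\ell^0(V)$-module, $\Pi:\wedge^2W\to V$ an $\mathfrak o(V)$-equivariant linear map, $p=p'+p''$ with $p'\equiv3\pmod4$, and $b=b(\Pi)$. Then the kernels of the linear maps $W\to W^*\otimes V$, $s\mapsto\Pi(s\wedge\cdot)$, and $W\to W^*$, $s\mapsto b(s,\cdot)$, coincide. In particular $\Pi$ is nondegenerate if and only if $b$ is nondegenerate.
   Context: Let $V=\mathbb{R}^{p,q}$ be $\mathbb R^{p+q}$ with the scalar product $\langle x,y\rangle=\sum_{i=1}^{p}x^iy^i-\sum_{j=p+1}^{p+q}x^jy^j$ and its standard orthonormal basis. The Clifford algebra $C\ell(V)$ is generated by $V$ subject to $xy+yx=-2\langle x,y\rangle 1$, with even part $C\ell^0(V)$. Identify $\mathfrak{o}(V)=\wedge^2V$ via $(x\wedge y)(z)=\langle y,z\rangle x-\langle x,z\rangle y$; the map $x\wedge y\mapsto-\frac14(xy-yx)$ is a Lie algebra isomorphism of $\mathfrak o(V)$ onto $\mathfrak{spin}(V)\subset C\ell^0(V)$, and via it $\mathfrak o(V)$ acts on any $C\ell^0(V)$-module $W$. $\Pi$ is called nondegenerate if $s\mapsto\Pi(s\wedge\cdot)$ is injective. Fix $p=p'+p''$ with $p'\equiv 3\pmod 4$; $e_1,\dots,e_{p'}$ are the first $p'$ standard basis vectors, spanning $E$, and $b(s,t)=\langle e_1,\Pi(e_2\cdots e_{p'}s\wedge t)\rangle$ for $s,t\in W$ (Clifford product acting on $W$). *)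

theory Defs
  imports Complex_Main
begin

text \<open>Concrete model of the Clifford algebra Cl(R^{p,q}), n = p+q, with
  standard orthonormal basis e_0,...,e_{n-1} (0-indexed; e_k has
  <e_k,e_k> = 1 for k < p and -1 for k >= p).  An element is a function
  from finite subsets A of {0..<n} (blades e_A = e_{a1}...e_{ak}, a1<...<ak)
  to real coefficients.  Relation: x y + y x = -2 <x,y> 1, hence
  e_k e_k = -<e_k,e_k>.\<close>

definition eta :: "nat \<Rightarrow> nat \<Rightarrow> real" where
  "eta p k = (if k < p then 1 else -1)"

definition blade_sign :: "nat \<Rightarrow> nat set \<Rightarrow> nat set \<Rightarrow> real" where
  "blade_sign p A B =
     (-1) ^ card {(a, b). a \<in> A \<and> b \<in> B \<and> b < a} * (\<Prod>k\<in>A \<inter> B. - eta p k)"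

definition cl_mult :: "nat \<Rightarrow> nat \<Rightarrow> (nat set \<Rightarrow> real) \<Rightarrow> (nat set \<Rightarrow> real) \<Rightarrow> (nat set \<Rightarrow> real)" where
  "cl_mult n p x y = (\<lambda>C. \<Sum>A\<in>Pow {0..<n}. \<Sum>B\<in>Pow {0..<n}.
       if (A - B) \<union> (B - A) = C then blade_sign p A B * x A * y B else 0)"

definition cl_one :: "nat set \<Rightarrow> real" where
  "cl_one = (\<lambda>A. if A = {} then 1 else 0)"

definition cl_e :: "nat \<Rightarrow> nat set \<Rightarrow> real" where
  "cl_e i = (\<lambda>A. if A = {i} then 1 else 0)"

definition cl_elem :: "nat \<Rightarrow> (nat set \<Rightarrow> real) \<Rightarrow> bool" where
  "cl_elem n x \<longleftrightarrow> (\<forall>A. x A \<noteq> 0 \<longrightarrow> A \<subseteq> {0..<n})"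

definition cl_even :: "nat \<Rightarrow> (nat set \<Rightarrow> real) \<Rightarrow> bool" where
  "cl_even n x \<longleftrightarrow> (\<forall>A. x A \<noteq> 0 \<longrightarrow> A \<subseteq> {0..<n} \<and> even (card A))"

definition cl_prod :: "nat \<Rightarrow> nat \<Rightarrow> (nat set \<Rightarrow> real) list \<Rightarrow> (nat set \<Rightarrow> real)" where
  "cl_prod n p xs = foldr (cl_mult n p) xs cl_one"

text \<open>the spin image of e_i \<and> e_j: -1/4 (e_i e_j - e_j e_i)\<close>
definition cl_spin :: "nat \<Rightarrow> nat \<Rightarrow> nat \<Rightarrow> nat \<Rightarrow> nat set \<Rightarrow> real" where
  "cl_spin n p i j = (\<lambda>A. - (1/4) * (cl_mult n p (cl_e i) (cl_e j) A - cl_mult n p (cl_e j) (cl_e i) A))"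

text \<open>action of e_i \<and> e_j \<in> o(V) on V (vectors as nat => real, components < n):
  (x \<and> y)(z) = <y,z> x - <x,z> y\<close>
definition wedge_act :: "nat \<Rightarrow> nat \<Rightarrow> nat \<Rightarrow> (nat \<Rightarrow> real) \<Rightarrow> (nat \<Rightarrow> real)" where
  "wedge_act p i j z = (\<lambda>k. (if k = i then eta p j * z j else 0) - (if k = j then eta p i * z i else 0))"

definition cl0_module :: "nat \<Rightarrow> nat \<Rightarrow> ((nat set \<Rightarrow> real) \<Rightarrow> 'w::real_vector \<Rightarrow> 'w) \<Rightarrow> bool" where
  "cl0_module n p \<rho> \<longleftrightarrow>
     (\<forall>x. cl_even n x \<longrightarrow> linear (\<rho> x)) \<and>
     (\<forall>x y a. cl_even n x \<longrightarrow> cl_even n y \<longrightarrow>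
         (\<forall>w. \<rho> (\<lambda>A. a * x A + y A) w = a *\<^sub>R \<rho> x w + \<rho> y w)) \<and>
     (\<forall>w. \<rho> cl_one w = w) \<and>
     (\<forall>x y. cl_even n x \<longrightarrow> cl_even n y \<longrightarrow> (\<forall>w. \<rho> (cl_mult n p x y) w = \<rho> x (\<rho> y w)))"

text \<open>Pi : \<and>^2 W \<rightarrow> V given as an antisymmetric bilinear map W \<times> W \<rightarrow> V,
  V-vectors as coordinate functions nat => real vanishing from index n on\<close>
definition wedge2_map :: "nat \<Rightarrow> ('w::real_vector \<Rightarrow> 'w \<Rightarrow> nat \<Rightarrow> real) \<Rightarrow> bool" where
  "wedge2_map n \<Pi> \<longleftrightarrow>
     (\<forall>s i. linear (\<lambda>t. \<Pi> s t i)) \<and> (\<forall>t i. linear (\<lambda>s. \<Pi> s t i)) \<and>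
     (\<forall>s t. \<Pi> s t = (\<lambda>i. - \<Pi> t s i)) \<and> (\<forall>s t i. n \<le> i \<longrightarrow> \<Pi> s t i = 0)"

text \<open>o(V)-equivariance, checked on the basis e_i \<and> e_j of o(V) = \<and>^2 V
  (equivalent to equivariance for all of o(V) by linearity)\<close>
definition equivariant :: "nat \<Rightarrow> nat \<Rightarrow> ((nat set \<Rightarrow> real) \<Rightarrow> 'w::real_vector \<Rightarrow> 'w)
     \<Rightarrow> ('w \<Rightarrow> 'w \<Rightarrow> nat \<Rightarrow> real) \<Rightarrow> bool" where
  "equivariant n p \<rho> \<Pi> \<longleftrightarrow>
     (\<forall>i j s t. i < n \<longrightarrow> j < n \<longrightarrow>
        (\<lambda>k. \<Pi> (\<rho> (cl_spin n p i j) s) t k + \<Pi> s (\<rho> (cl_spin n p i j) t) k)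
        = wedge_act p i j (\<Pi> s t))"

text \<open>b(s,t) = <e_1, Pi(e_2 ... e_{p'} s \<and> t)>; 0-indexed: e_0 and e_1...e_{p'-1}.
  <e_0, v> = v 0 since e_0 is spacelike (p \<ge> p' \<ge> 3).\<close>
definition bform :: "nat \<Rightarrow> nat \<Rightarrow> nat \<Rightarrow> ((nat set \<Rightarrow> real) \<Rightarrow> 'w \<Rightarrow> 'w)
     \<Rightarrow> ('w \<Rightarrow> 'w \<Rightarrow> nat \<Rightarrow> real) \<Rightarrow> 'w \<Rightarrow> 'w \<Rightarrow> real" where
  "bform n p p' \<rho> \<Pi> s t = eta p 0 * \<Pi> (\<rho> (cl_prod n p (map cl_e [1..<p'])) s) t 0"

end

theory Submission
  imports Defs
begin

text \<open>Let \<open>K\<close> be the kernel of \<open>s \<mapsto> \<Pi>(s \<and> \<cdot>)\<close>. Equivariance under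
  \<open>e\<^sub>a \<and> e\<^sub>b\<close> shows that \<open>K\<close> is stable under \<open>\<rho>(e\<^sub>a e\<^sub>b)\<close>, and since
  \<open>(e\<^sub>a e\<^sub>b)\<^sup>2\<close> is a nonzero scalar the converse holds as well. As \<open>p' - 1\<close> is
  even, \<open>e\<^sub>2 \<cdots> e\<^sub>p\<^sub>'\<close> is a product of such elements, so \<open>s \<in> K\<close> iff
  \<open>\<rho>(e\<^sub>2 \<cdots> e\<^sub>p\<^sub>') s \<in> K\<close>. Finally, if a single component \<open>\<langle>e\<^sub>i, \<Pi>(u \<and> \<cdot>)\<rangle>\<close>
  vanishes, then equivariance under \<open>e\<^sub>i \<and> e\<^sub>j\<close> forces the \<open>j\<close>-th component to
  vanish too, so \<open>u \<in> K\<close>.\<close>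

lemma cl_mult_blade_left:
  assumes "D \<subseteq> {0..<n}"
  shows "cl_mult n p (\<lambda>A. if A = D then c else 0) y C =
    (if C \<subseteq> {0..<n} then c * blade_sign p D ((C - D) \<union> (D - C)) * y ((C - D) \<union> (D - C)) else 0)"
proof -
  have "cl_mult n p (\<lambda>A. if A = D then c else 0) y C =
     (\<Sum>A\<in>Pow {0..<n}. if A = D then (\<Sum>B\<in>Pow {0..<n}.
        if (D - B) \<union> (B - D) = C then blade_sign p D B * c * y B else 0) else 0)"
    unfolding cl_mult_def
    by (rule sum.cong) (simp_all add: if_distrib[of "\<lambda>x. _ * x * _"] cong: if_cong)
  also have "\<dots> = (\<Sum>B\<in>Pow {0..<n}. if (D - B) \<union> (B - D) = C then blade_sign p D B * c * y B else 0)"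
    using assms by (simp add: sum.delta)
  also have "\<dots> = (\<Sum>B\<in>Pow {0..<n}. if B = (C - D) \<union> (D - C) then blade_sign p D B * c * y B else 0)"
    by (rule sum.cong) (auto intro!: if_cong)
  also have "\<dots> = (if C \<subseteq> {0..<n} then c * blade_sign p D ((C - D) \<union> (D - C)) * y ((C - D) \<union> (D - C)) else 0)"
  proof -
    have "(C - D) \<union> (D - C) \<in> Pow {0..<n} \<longleftrightarrow> C \<subseteq> {0..<n}" using assms by blast
    then show ?thesis by (subst sum.delta[OF finite_Pow_iff[THEN iffD2]]) (auto simp: ac_simps)
  qed
  finally show ?thesis .
qed

lemma cl_mult_e_left:
  assumes "a < n"
  shows "cl_mult n p (cl_e a) y C =
    (if C \<subseteq> {0..<n} then blade_sign p {a} ((C - {a}) \<union> ({a} - C)) * y ((C - {a}) \<union> ({a} - C)) else 0)"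
  unfolding cl_e_def using assms by (subst cl_mult_blade_left) auto

lemma blade_sign_singleton:
  "blade_sign p {a} B = (-1) ^ card {y\<in>B. y < a} * (if a \<in> B then - eta p a else 1)"
proof -
  have "{(x, y). x \<in> {a} \<and> y \<in> B \<and> y < x} = Pair a ` {y\<in>B. y < a}" by auto
  then have "card {(x, y). x \<in> {a} \<and> y \<in> B \<and> y < x} = card {y\<in>B. y < a}"
    by (simp add: card_image inj_on_def)
  moreover have "{a} \<inter> B = (if a \<in> B then {a} else {})" by auto
  ultimately show ?thesis unfolding blade_sign_def by simp
qed

lemma blade_sign_doubleton:
  assumes "a \<noteq> b"
  shows "blade_sign p {a, b} B = (-1) ^ card {y\<in>B. y < a} * (-1) ^ card {y\<in>B. y < b}
     * (if a \<in> B then - eta p a else 1) * (if b \<in> B then - eta p b else 1)"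
proof -
  have "{(x, y). x \<in> {a, b} \<and> y \<in> B \<and> y < x} = Pair a ` {y\<in>B. y < a} \<union> Pair b ` {y\<in>B. y < b}"
    by auto
  moreover have "Pair a ` {y\<in>B. y < a} \<inter> Pair b ` {y\<in>B. y < b} = {}" using assms by auto
  ultimately have "card {(x, y). x \<in> {a, b} \<and> y \<in> B \<and> y < x} = card {y\<in>B. y < a} + card {y\<in>B. y < b}"
    by (simp add: card_Un_disjoint card_image inj_on_def)
  moreover have "(\<Prod>k\<in>{a, b} \<inter> B. - eta p k) =
      (if a \<in> B then - eta p a else 1) * (if b \<in> B then - eta p b else 1)"
    using assms by (cases "a \<in> B"; cases "b \<in> B") (auto simp: Int_insert_left)
  ultimately show ?thesis unfolding blade_sign_def by (simp add: power_add)
qed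

lemma minus_one_power_card_less_symdiff:
  fixes a b :: nat
  shows "(-1::real) ^ card {y\<in>(B - {b}) \<union> ({b} - B). y < a} =
    (-1) ^ card {y\<in>B. y < a} * (if b < a then -1 else 1)"
proof (cases "b < a")
  case True
  define S where "S X = {y\<in>X. y < a}" for X
  have fin: "finite (S X)" for X
    unfolding S_def by (rule finite_subset[of _ "{..<a}"]) auto
  show ?thesis
  proof (cases "b \<in> B")
    case True
    then have "S B = insert b (S ((B - {b}) \<union> ({b} - B)))"
      and "b \<notin> S ((B - {b}) \<union> ({b} - B))"
      using \<open>b < a\<close> unfolding S_def by auto
    then have "card (S B) = Suc (card (S ((B - {b}) \<union> ({b} - B))))"
      using fin by simp
    then show ?thesis using \<open>b < a\<close> unfolding S_def by simp
  next
    case False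
    then have "S ((B - {b}) \<union> ({b} - B)) = insert b (S B)" and "b \<notin> S B"
      using \<open>b < a\<close> unfolding S_def by auto
    then have "card (S ((B - {b}) \<union> ({b} - B))) = Suc (card (S B))"
      using fin by simp
    then show ?thesis using \<open>b < a\<close> unfolding S_def by simp
  qed
next
  case False
  then have "{y\<in>(B - {b}) \<union> ({b} - B). y < a} = {y\<in>B. y < a}" by auto
  then show ?thesis using False by simp
qed

lemma cl_mult_e_e:
  assumes "a < n" "b < n" "a \<noteq> b"
  shows "cl_mult n p (cl_e a) (cl_e b) = (\<lambda>C. if C = {a, b} then (if b < a then -1 else 1) else 0)"
proof
  fix C
  show "cl_mult n p (cl_e a) (cl_e b) C = (if C = {a, b} then (if b < a then -1 else 1) else 0)"
  proof (cases "C = {a, b}")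
    case True
    then have "(C - {a}) \<union> ({a} - C) = {b}" using assms by auto
    moreover have "{y\<in>{b}. y < a} = (if b < a then {b} else {})" by auto
    ultimately show ?thesis
      using True assms by (subst cl_mult_e_left) (simp_all add: cl_e_def blade_sign_singleton)
  next
    case False
    then have "(C - {a}) \<union> ({a} - C) \<noteq> {b}" using assms by auto
    then show ?thesis using False assms by (subst cl_mult_e_left) (simp_all add: cl_e_def)
  qed
qed

lemma cl_even_cl_mult_e_e:
  assumes "a < n" "b < n" "a \<noteq> b"
  shows "cl_even n (cl_mult n p (cl_e a) (cl_e b))"
  unfolding cl_even_def using assms by (simp add: cl_mult_e_e)

lemma cl_spin_eq_cl_mult_e_e:
  assumes "a < n" "b < n" "a \<noteq> b"
  shows "cl_spin n p a b = (\<lambda>C. (- 1/2) * cl_mult n p (cl_e a) (cl_e b) C)"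
  unfolding cl_spin_def using assms by (auto simp: cl_mult_e_e insert_commute)

lemma cl_mult_e_e_square:
  assumes "a < n" "b < n" "a \<noteq> b"
  shows "cl_mult n p (cl_mult n p (cl_e a) (cl_e b)) (cl_mult n p (cl_e a) (cl_e b)) =
    (\<lambda>C. (- eta p a * eta p b) * cl_one C)"
proof
  fix C
  define \<sigma> :: real where "\<sigma> = (if b < a then -1 else 1)"
  have E: "cl_mult n p (cl_e a) (cl_e b) = (\<lambda>A. if A = {a, b} then \<sigma> else 0)"
    unfolding \<sigma>_def using assms by (rule cl_mult_e_e)
  have "\<sigma> * \<sigma> = 1" unfolding \<sigma>_def by simp
  moreover have "blade_sign p {a, b} {a, b} = - (eta p a * eta p b)"
  proof -
    have "{y \<in> {a, b}. y < a} = (if b < a then {b} else {})"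
      and "{y \<in> {a, b}. y < b} = (if a < b then {a} else {})"
      using assms by auto
    then show ?thesis using assms by (subst blade_sign_doubleton) auto
  qed
  moreover have "C \<noteq> {} \<Longrightarrow> (C - {a, b}) \<union> ({a, b} - C) \<noteq> {a, b}" by auto
  ultimately show "cl_mult n p (cl_mult n p (cl_e a) (cl_e b)) (cl_mult n p (cl_e a) (cl_e b)) C =
      (- eta p a * eta p b) * cl_one C"
    unfolding E using assms
    by (subst cl_mult_blade_left) (auto simp: cl_one_def algebra_simps)
qed

lemma cl_mult_e_e_assoc:
  assumes "a < n" "b < n" "a \<noteq> b"
  shows "cl_mult n p (cl_mult n p (cl_e a) (cl_e b)) y = cl_mult n p (cl_e a) (cl_mult n p (cl_e b) y)"
proof
  fix C
  define B where "B = (C - {a, b}) \<union> ({a, b} - C)"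
  define Ca where "Ca = (C - {a}) \<union> ({a} - C)"
  have Ca_B: "Ca = (B - {b}) \<union> ({b} - B)" and B_Ca: "(Ca - {b}) \<union> ({b} - Ca) = B"
    unfolding B_def Ca_def using assms by auto
  have "blade_sign p {a} Ca = (-1) ^ card {y\<in>B. y < a} * (if b < a then -1 else 1) * (if a \<in> B then - eta p a else 1)"
  proof -
    have "a \<in> Ca \<longleftrightarrow> a \<in> B" unfolding Ca_B using assms by auto
    then show ?thesis unfolding blade_sign_singleton Ca_B minus_one_power_card_less_symdiff by simp
  qed
  then have sign: "(if b < a then -1 else 1) * blade_sign p {a, b} B = blade_sign p {a} Ca * blade_sign p {b} B"
    using assms by (simp add: blade_sign_singleton blade_sign_doubleton ac_simps)
  have "C \<subseteq> {0..<n} \<Longrightarrow> Ca \<subseteq> {0..<n}" unfolding Ca_def using assms by auto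
  then show "cl_mult n p (cl_mult n p (cl_e a) (cl_e b)) y C = cl_mult n p (cl_e a) (cl_mult n p (cl_e b) y) C"
    using assms sign by (simp add: cl_mult_e_e cl_mult_blade_left cl_mult_e_left B_Ca flip: B_def Ca_def)
qed

lemma cl_prod_e_support:
  assumes "\<forall>x\<in>set xs. x < n" and "cl_prod n p (map cl_e xs) A \<noteq> 0"
  shows "A \<subseteq> {0..<n} \<and> even (card A + length xs)"
  using assms
proof (induction xs arbitrary: A)
  case Nil
  then show ?case by (simp add: cl_prod_def cl_one_def split: if_splits)
next
  case (Cons x xs)
  define A' where "A' = (A - {x}) \<union> ({x} - A)"
  have "cl_prod n p (map cl_e (x # xs)) = cl_mult n p (cl_e x) (cl_prod n p (map cl_e xs))"
    by (simp add: cl_prod_def)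
  then have A: "A \<subseteq> {0..<n}" and "cl_prod n p (map cl_e xs) A' \<noteq> 0"
    using Cons.prems unfolding A'_def by (auto simp: cl_mult_e_left split: if_splits)
  with Cons have "even (card A' + length xs)" by auto
  moreover have "card A' + 1 = card A \<or> card A' = card A + 1"
  proof (cases "x \<in> A")
    case True
    then have "A' = A - {x}" unfolding A'_def by auto
    then show ?thesis using True A finite_subset by (metis Suc_eq_plus1 card_Suc_Diff1 finite_atLeastLessThan)
  next
    case False
    then have "A' = insert x A" unfolding A'_def by auto
    then show ?thesis using False A finite_subset by (metis Suc_eq_plus1 card_insert_disjoint finite_atLeastLessThan)
  qed
  ultimately have "even (card A + length (x # xs))" by simp presburger
  with A show ?case by blast
qed

lemma cl_even_cl_prod_e:
  "\<forall>x\<in>set xs. x < n \<Longrightarrow> even (length xs) \<Longrightarrow> cl_even n (cl_prod n p (map cl_e xs))"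
  unfolding cl_even_def using cl_prod_e_support by fastforce

definition pairing_kernel :: "('w \<Rightarrow> 'w \<Rightarrow> nat \<Rightarrow> real) \<Rightarrow> 'w set" where
  "pairing_kernel \<Pi> = {s. \<forall>t. \<Pi> s t = (\<lambda>i. 0)}"

locale equivariant_pairing =
  fixes n p :: nat
    and \<rho> :: "(nat set \<Rightarrow> real) \<Rightarrow> 'w::real_vector \<Rightarrow> 'w"
    and \<Pi> :: "'w \<Rightarrow> 'w \<Rightarrow> nat \<Rightarrow> real"
  assumes module: "cl0_module n p \<rho>"
    and pairing: "wedge2_map n \<Pi>"
    and equivariance: "equivariant n p \<rho> \<Pi>"
begin

lemma rho_linear: "cl_even n x \<Longrightarrow> linear (\<rho> x)"
  using module unfolding cl0_module_def by blast

lemma rho_mult: "cl_even n x \<Longrightarrow> cl_even n y \<Longrightarrow> \<rho> (cl_mult n p x y) w = \<rho> x (\<rho> y w)"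
  using module unfolding cl0_module_def by blast

lemma rho_one: "\<rho> cl_one w = w"
  using module unfolding cl0_module_def by blast

lemma rho_scaled:
  assumes "cl_even n x"
  shows "\<rho> (\<lambda>A. c * x A) w = c *\<^sub>R \<rho> x w"
proof -
  have zero: "cl_even n (\<lambda>_. 0)" unfolding cl_even_def by simp
  have comb: "\<rho> (\<lambda>A. c * x A + y A) w = c *\<^sub>R \<rho> x w + \<rho> y w" if "cl_even n x" "cl_even n y" for c x y
    using module that unfolding cl0_module_def by blast
  have "\<rho> (\<lambda>_. 0) w = 0" using comb[OF zero zero, of 1] by simp
  then show ?thesis using comb[OF assms zero, of c] by simp
qed

lemma Pi_scaleR_left: "\<Pi> (c *\<^sub>R s) t i = c * \<Pi> s t i"
proof -
  have "linear (\<lambda>s. \<Pi> s t i)" using pairing unfolding wedge2_map_def by blast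
  from linear_scale [OF this] show ?thesis by simp
qed

lemma Pi_scaleR_right: "\<Pi> s (c *\<^sub>R t) i = c * \<Pi> s t i"
proof -
  have "linear (\<lambda>t. \<Pi> s t i)" using pairing unfolding wedge2_map_def by blast
  from linear_scale [OF this] show ?thesis by simp
qed

lemma Pi_eq_0_beyond: "n \<le> i \<Longrightarrow> \<Pi> s t i = 0"
  using pairing unfolding wedge2_map_def by blast

lemma rho_e_e_square:
  assumes "a < n" "b < n" "a \<noteq> b"
  shows "\<rho> (cl_mult n p (cl_e a) (cl_e b)) (\<rho> (cl_mult n p (cl_e a) (cl_e b)) w) =
    (- eta p a * eta p b) *\<^sub>R w"
proof -
  have "\<rho> (cl_mult n p (cl_e a) (cl_e b)) (\<rho> (cl_mult n p (cl_e a) (cl_e b)) w) =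
      \<rho> (cl_mult n p (cl_mult n p (cl_e a) (cl_e b)) (cl_mult n p (cl_e a) (cl_e b))) w"
    using assms by (simp add: rho_mult cl_even_cl_mult_e_e)
  also have "\<dots> = \<rho> (\<lambda>C. (- eta p a * eta p b) * cl_one C) w"
    unfolding cl_mult_e_e_square [OF assms] ..
  also have "\<dots> = (- eta p a * eta p b) *\<^sub>R w"
  proof -
    have "cl_even n cl_one" by (simp add: cl_even_def cl_one_def)
    then show ?thesis by (simp only: rho_scaled rho_one)
  qed
  finally show ?thesis .
qed

lemma Pi_rho_e_e:
  assumes "a < n" "b < n" "a \<noteq> b"
  shows "\<Pi> (\<rho> (cl_mult n p (cl_e a) (cl_e b)) s) t k + \<Pi> s (\<rho> (cl_mult n p (cl_e a) (cl_e b)) t) k =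
    -2 * wedge_act p a b (\<Pi> s t) k"
proof -
  have "\<rho> (cl_spin n p a b) w = (- 1/2) *\<^sub>R \<rho> (cl_mult n p (cl_e a) (cl_e b)) w" for w
    unfolding cl_spin_eq_cl_mult_e_e[OF assms] by (rule rho_scaled[OF cl_even_cl_mult_e_e[OF assms]])
  then have rho: "\<rho> (cl_mult n p (cl_e a) (cl_e b)) w = (-2) *\<^sub>R \<rho> (cl_spin n p a b) w" for w
    by simp
  have "(\<lambda>k. \<Pi> (\<rho> (cl_spin n p a b) s) t k + \<Pi> s (\<rho> (cl_spin n p a b) t) k) =
      wedge_act p a b (\<Pi> s t)"
    using equivariance assms unfolding equivariant_def by blast
  from fun_cong [OF this, of k] show ?thesis
    unfolding rho Pi_scaleR_left Pi_scaleR_right by simp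
qed

lemma rho_e_e_mem_kernel_iff:
  assumes "a < n" "b < n" "a \<noteq> b"
  shows "\<rho> (cl_mult n p (cl_e a) (cl_e b)) s \<in> pairing_kernel \<Pi> \<longleftrightarrow> s \<in> pairing_kernel \<Pi>"
proof -
  have stable: "\<rho> (cl_mult n p (cl_e a) (cl_e b)) s' \<in> pairing_kernel \<Pi>"
    if "s' \<in> pairing_kernel \<Pi>" for s'
    using Pi_rho_e_e [OF assms, of s'] that
    unfolding pairing_kernel_def by (simp add: wedge_act_def fun_eq_iff)
  have "s \<in> pairing_kernel \<Pi>" if "\<rho> (cl_mult n p (cl_e a) (cl_e b)) s \<in> pairing_kernel \<Pi>"
  proof -
    define c where "c = - eta p a * eta p b"
    from stable [OF that] have "c *\<^sub>R s \<in> pairing_kernel \<Pi>"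
      unfolding c_def by (simp only: rho_e_e_square [OF assms])
    moreover have "c \<noteq> 0" unfolding c_def by (simp add: eta_def)
    ultimately show ?thesis
      unfolding pairing_kernel_def by (simp add: fun_eq_iff Pi_scaleR_left)
  qed
  with stable show ?thesis by blast
qed

lemma rho_cl_prod_e_mem_kernel_iff:
  assumes "\<forall>x\<in>set xs. x < n" "even (length xs)" "distinct xs"
  shows "\<rho> (cl_prod n p (map cl_e xs)) s \<in> pairing_kernel \<Pi> \<longleftrightarrow> s \<in> pairing_kernel \<Pi>"
  using assms
proof (induction xs arbitrary: s rule: induct_list012)
  case 1
  then show ?case by (simp add: cl_prod_def rho_one)
next
  case (2 x)
  then show ?case by simp
next
  case (3 x y zs)
  then have xy: "x < n" "y < n" "x \<noteq> y" by auto
  have "cl_prod n p (map cl_e (x # y # zs)) =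
      cl_mult n p (cl_mult n p (cl_e x) (cl_e y)) (cl_prod n p (map cl_e zs))"
    using xy by (simp add: cl_prod_def cl_mult_e_e_assoc)
  then have "\<rho> (cl_prod n p (map cl_e (x # y # zs))) s =
      \<rho> (cl_mult n p (cl_e x) (cl_e y)) (\<rho> (cl_prod n p (map cl_e zs)) s)"
    using xy "3.prems" by (simp add: rho_mult cl_even_cl_mult_e_e cl_even_cl_prod_e)
  then show ?case using "3.IH" "3.prems" rho_e_e_mem_kernel_iff [OF xy] by simp
qed

lemma Pi_eq_0_if_other_component_eq_0:
  assumes "i < n" "j < n" "i \<noteq> j" and u: "\<forall>t. \<Pi> u t i = 0"
  shows "\<Pi> u t j = 0"
proof -
  define J where "J = \<rho> (cl_mult n p (cl_e i) (cl_e j))"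
  define c where "c = - eta p i * eta p j"
  have "c \<noteq> 0" and "eta p j \<noteq> 0" unfolding c_def by (simp_all add: eta_def)
  have JJ: "J (J w) = c *\<^sub>R w" for w
    unfolding J_def c_def by (rule rho_e_e_square [OF assms(1-3)])
  have J_surj: "J ((1 / c) *\<^sub>R J t') = t'" for t'
    using rho_linear [OF cl_even_cl_mult_e_e [OF assms(1-3)]] JJ \<open>c \<noteq> 0\<close>
    unfolding J_def by (simp add: linear_scale)
  have eqv_i: "\<Pi> (J s) t' i + \<Pi> s (J t') i = -2 * eta p j * \<Pi> s t' j" for s t'
    using Pi_rho_e_e [OF assms(1-3), of s t' i] assms(3) unfolding J_def by (simp add: wedge_act_def)
  have eqv_j: "\<Pi> (J s) t' j + \<Pi> s (J t') j = 2 * eta p i * \<Pi> s t' i" for s t'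
    using Pi_rho_e_e [OF assms(1-3), of s t' j] assms(3) unfolding J_def by (simp add: wedge_act_def)
  have "\<Pi> (J u) (J t') i = 0" for t'
  proof -
    have "\<Pi> (J u) t' j + \<Pi> u (J t') j = 0" using eqv_j [of u t'] u by simp
    moreover have "\<Pi> (J u) (J t') i = -2 * eta p j * \<Pi> u (J t') j" using eqv_i [of u "J t'"] u by simp
    moreover have "\<Pi> (J u) (J t') i = -2 * eta p j * \<Pi> (J u) t' j"
      using eqv_i [of "J u" t'] u by (simp add: JJ Pi_scaleR_left)
    ultimately show ?thesis using \<open>eta p j \<noteq> 0\<close> by auto
  qed
  then have "\<Pi> (J u) t i = 0" by (metis J_surj)
  then show ?thesis using eqv_i [of u t] u \<open>eta p j \<noteq> 0\<close> by simp
qed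

lemma mem_kernel_iff_component_eq_0:
  assumes "i < n"
  shows "s \<in> pairing_kernel \<Pi> \<longleftrightarrow> (\<forall>t. \<Pi> s t i = 0)"
proof
  assume component: "\<forall>t. \<Pi> s t i = 0"
  have "\<Pi> s t j = 0" for t j
    using Pi_eq_0_if_other_component_eq_0 [OF assms _ _ component] component Pi_eq_0_beyond
    by (cases "j = i \<or> n \<le> j") auto
  then show "s \<in> pairing_kernel \<Pi>" unfolding pairing_kernel_def by auto
qed (simp add: pairing_kernel_def)

end

theorem mainTheorem2:
  fixes p q p' :: nat
    and \<rho> :: "(nat set \<Rightarrow> real) \<Rightarrow> 'w::real_vector \<Rightarrow> 'w"
    and \<Pi> :: "'w \<Rightarrow> 'w \<Rightarrow> nat \<Rightarrow> real"
  assumes "cl0_module (p + q) p \<rho>"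
    and "wedge2_map (p + q) \<Pi>"
    and "equivariant (p + q) p \<rho> \<Pi>"
    and "p' \<le> p" and "p' mod 4 = 3"
  shows "{s. \<forall>t. \<Pi> s t = (\<lambda>i. 0)} = {s. \<forall>t. bform (p + q) p p' \<rho> \<Pi> s t = 0}
     \<and> ((\<forall>s. (\<forall>t. \<Pi> s t = (\<lambda>i. 0)) \<longrightarrow> s = 0) \<longleftrightarrow>
        (\<forall>s. (\<forall>t. bform (p + q) p p' \<rho> \<Pi> s t = 0) \<longrightarrow> s = 0))"
proof -
  interpret equivariant_pairing "p + q" p \<rho> \<Pi>
    using assms(1-3) by unfold_locales
  define X where "X = cl_prod (p + q) p (map cl_e [1..<p'])"
  have "0 < p + q" using assms(4,5) by presburger
  have X: "\<rho> X s \<in> pairing_kernel \<Pi> \<longleftrightarrow> s \<in> pairing_kernel \<Pi>" for s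
    unfolding X_def using assms(4,5)
    by (intro rho_cl_prod_e_mem_kernel_iff) (auto, presburger)
  have "bform (p + q) p p' \<rho> \<Pi> s t = eta p 0 * \<Pi> (\<rho> X s) t 0" for s t
    unfolding bform_def X_def ..
  moreover have "eta p 0 \<noteq> 0" by (simp add: eta_def)
  ultimately have "pairing_kernel \<Pi> = {s. \<forall>t. bform (p + q) p p' \<rho> \<Pi> s t = 0}"
    using mem_kernel_iff_component_eq_0 [OF \<open>0 < p + q\<close>] X by auto
  then show ?thesis unfolding pairing_kernel_def by blast
qed

end
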